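(* Let $L\ge3$ be odd and let $\mathcal{C}$ be an equi-difference code in $\mathsf{CAC}(L,3)$ with leave $\Lambda$. If $|\Lambda|<4$ and $\{L/3,2L/3\}\not\subseteq\Lambda$, then $\mathcal{C}$ is optimal; moreover $|\mathcal{C}|=M^e(L,3)=M(L,3)$.
   Context: $\mathcal{P}(L,\omega)$ is the set of $\omega$-element subsets of $\mathbb{Z}_L$. For $\mathcal{I}\in\mathcal{P}(L,\omega)$: $d(\mathcal{I})=\{a-b \bmod L: a,b\in\mathcal{I}\}$, $d^*(\mathcal{I})=d(\mathcal{I})\setminus\{0\}$. A conflict-avoiding code (CAC) of length $L$ and weight $\omega$ is a set $\mathcal{C}\subseteq\mathcal{P}(L,\omega)$ with $d^*(\mathcal{I})\cap d^*(\mathcal{J})=\emptyset$ for all distinct $\mathcal{I},\mathcal{J}\in\mathcal{C}$; $\mathsf{CAC}(L,\omega)$ is the class of these codes, $M(L,\omega)$ their maximum size, and a code of size $M(L,\omega)$ is optimal. A codeword is equi-difference if it equals $\{0,g,2g,\dots,(\omega-1)g\}$ (mod $L$) for some $g$; a code is equi-difference if all its codewords are; $M^e(L,\omega)$ is the maximum size of an equi-difference code in $\mathsf{CAC}(L,\omega)$. The leave of $\mathcal{C}$ is $\Lambda=\mathbb{Z}_L\setminus\bigcup_{\mathcal{I}\in\mathcal{C}}d(\mathcal{I})$. (When $3\nmid L$ the condition $\{L/3,2L/3\}\not\subseteq\Lambda$ is vacuous.) *)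

theory Defs
  imports Main
begin

text \<open>Z_L is represented by the natural numbers {0..<L} with arithmetic mod L.\<close>

definition dset :: "nat \<Rightarrow> nat set \<Rightarrow> nat set" where
  "dset L I = {(a + L - b) mod L | a b. a \<in> I \<and> b \<in> I}"

definition dstar :: "nat \<Rightarrow> nat set \<Rightarrow> nat set" where
  "dstar L I = dset L I - {0}"

definition Pset :: "nat \<Rightarrow> nat \<Rightarrow> nat set set" where
  "Pset L w = {I. I \<subseteq> {..<L} \<and> card I = w}"

definition is_CAC :: "nat \<Rightarrow> nat \<Rightarrow> nat set set \<Rightarrow> bool" where
  "is_CAC L w C \<longleftrightarrow> C \<subseteq> Pset L w \<and>
     (\<forall>I\<in>C. \<forall>J\<in>C. I \<noteq> J \<longrightarrow> dstar L I \<inter> dstar L J = {})"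

definition equi_diff_word :: "nat \<Rightarrow> nat \<Rightarrow> nat set \<Rightarrow> bool" where
  "equi_diff_word L w I \<longleftrightarrow> (\<exists>g::nat. I = {(i * g) mod L | i. i < w})"

definition equi_diff_code :: "nat \<Rightarrow> nat \<Rightarrow> nat set set \<Rightarrow> bool" where
  "equi_diff_code L w C \<longleftrightarrow> (\<forall>I\<in>C. equi_diff_word L w I)"

definition M_CAC :: "nat \<Rightarrow> nat \<Rightarrow> nat" where
  "M_CAC L w = Max {card C | C. is_CAC L w C}"

definition Me_CAC :: "nat \<Rightarrow> nat \<Rightarrow> nat" where
  "Me_CAC L w = Max {card C | C. is_CAC L w C \<and> equi_diff_code L w C}"

definition optimal_CAC :: "nat \<Rightarrow> nat \<Rightarrow> nat set set \<Rightarrow> bool" where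
  "optimal_CAC L w C \<longleftrightarrow> is_CAC L w C \<and> card C = M_CAC L w"

definition leave :: "nat \<Rightarrow> nat set set \<Rightarrow> nat set" where
  "leave L C = {..<L} - (\<Union>I\<in>C. dset L I)"

end

theory Submission
  imports Defs
begin

text \<open>For odd \<open>L\<close> the nonzero differences of a 3-subset of \<open>\<int>\<^sub>L\<close> come in pairs \<open>\<plusminus>d\<close> with
  \<open>d \<noteq> -d\<close>, so a word has either at least four of them or exactly the two \<open>L/3, 2L/3\<close>
  (an exceptional word); the latter kind can occur at most once in a code, and only if \<open>3 dvd L\<close>. Counting
  differences in \<open>{1..<L}\<close> bounds every code by \<open>4|C| \<le> L - 1 + 2e\<close>, where \<open>e\<close> is
  the number of exceptional words. An equi-difference word \<open>{0, g, 2g}\<close> has at most the four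
  differences \<open>\<plusminus>g, \<plusminus>2g\<close>, so the leave of an equi-difference code satisfies
  \<open>L - 1 + 2e \<le> 4|C| + |\<Lambda>|\<close>; the hypothesis on \<open>L/3, 2L/3\<close> forces \<open>e = 1\<close> whenever
  \<open>3 dvd L\<close>, because an equi-difference word with difference \<open>L/3\<close> is exceptional. Hence every code \<open>C'\<close> has \<open>4|C'| \<le> 4|C| + |\<Lambda>| < 4|C| + 4\<close>.\<close>

abbreviation zdiff :: "nat \<Rightarrow> nat \<Rightarrow> nat \<Rightarrow> nat" where
  "zdiff L x y \<equiv> (x + L - y) mod L"

lemma zdiff_eq:
  assumes "x < L" "y < L"
  shows "zdiff L x y = (if y \<le> x then x - y else x + L - y)"
proof (cases "y \<le> x")
  case True
  then have "x + L - y = (x - y) + L" by simp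
  then have "zdiff L x y = (x - y) mod L" by (simp only: mod_add_self2)
  then show ?thesis using True assms by simp
qed (use assms in simp)

lemma zdiff_pos: "x < L \<Longrightarrow> y < L \<Longrightarrow> x \<noteq> y \<Longrightarrow> 0 < zdiff L x y"
  by (simp add: zdiff_eq)

lemma zdiff_add_zdiff: "x < L \<Longrightarrow> y < L \<Longrightarrow> x \<noteq> y \<Longrightarrow> zdiff L x y + zdiff L y x = L"
  by (simp add: zdiff_eq)

lemma zdiff_swap_neq:
  assumes "odd L" "x < L" "y < L" "x \<noteq> y"
  shows "zdiff L x y \<noteq> zdiff L y x"
proof
  assume "zdiff L x y = zdiff L y x"
  then have "L = 2 * zdiff L x y" using zdiff_add_zdiff[OF assms(2-4)] by simp
  then show False using \<open>odd L\<close> by (metis dvd_triv_left)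
qed

lemma zdiff_right_cancel: "x < L \<Longrightarrow> y < L \<Longrightarrow> z < L \<Longrightarrow> zdiff L x y = zdiff L z y \<Longrightarrow> x = z"
  by (simp add: zdiff_eq split: if_splits)

lemma zdiff_left_cancel: "x < L \<Longrightarrow> y < L \<Longrightarrow> z < L \<Longrightarrow> zdiff L y x = zdiff L y z \<Longrightarrow> x = z"
  by (simp add: zdiff_eq split: if_splits)

lemma zdiff_add_cases: "x < L \<Longrightarrow> y < L \<Longrightarrow> zdiff L x y + y = (if y \<le> x then x else x + L)"
  by (simp add: zdiff_eq)

lemma mem_dset_iff: "z \<in> dset L I \<longleftrightarrow> (\<exists>x\<in>I. \<exists>y\<in>I. z = zdiff L x y)"
  by (auto simp: dset_def)

lemma mem_dstar_iff: "z \<in> dstar L I \<longleftrightarrow> z \<noteq> 0 \<and> (\<exists>x\<in>I. \<exists>y\<in>I. z = zdiff L x y)"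
  by (auto simp: dstar_def mem_dset_iff)

lemma dstar_subset: "0 < L \<Longrightarrow> dstar L I \<subseteq> {1..<L}"
  by (auto simp: mem_dstar_iff)

lemma finite_dstar: "0 < L \<Longrightarrow> finite (dstar L I)"
  using dstar_subset finite_subset by blast

lemma dstar_triple:
  assumes "a < L" "b < L" "c < L" "a \<noteq> b" "b \<noteq> c" "a \<noteq> c"
  shows "dstar L {a, b, c} =
    {zdiff L a b, zdiff L b a, zdiff L b c, zdiff L c b, zdiff L c a, zdiff L a c}"
  using assms zdiff_pos[of _ L] unfolding set_eq_iff mem_dstar_iff by fastforce

lemma zdiff_chain_eq:
  assumes "odd L" "x < L" "y < L" "z < L" "x \<noteq> y" "y \<noteq> z" "x \<noteq> z"
    and "card {zdiff L x y, zdiff L y x, zdiff L y z, zdiff L z y} < 4"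
  shows "zdiff L y z = zdiff L x y"
proof (rule ccontr)
  assume ne: "zdiff L y z \<noteq> zdiff L x y"
  have "zdiff L y x \<noteq> zdiff L z y"
    using ne zdiff_add_zdiff[of x L y] zdiff_add_zdiff[of y L z] assms(2-7) by auto
  moreover have "zdiff L x y \<noteq> zdiff L z y" "zdiff L y x \<noteq> zdiff L y z"
    using zdiff_right_cancel zdiff_left_cancel assms(2-7) by blast+
  moreover have "zdiff L x y \<noteq> zdiff L y x" "zdiff L y z \<noteq> zdiff L z y"
    using zdiff_swap_neq assms(1-7) by blast+
  ultimately show False
    using ne assms(8) by (simp add: card_insert_if)
qed

lemma card_dstar_lt_4_imp_thirds:
  assumes "odd L" "I \<subseteq> {..<L}" "card I = 3" "card (dstar L I) < 4"
  shows "3 dvd L \<and> dstar L I = {L div 3, 2 * L div 3}"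
proof -
  obtain a b c where I: "I = {a, b, c}" and distinct: "a \<noteq> b" "b \<noteq> c" "a \<noteq> c"
    using assms(3) card_3_iff by metis
  have lt: "a < L" "b < L" "c < L" using assms(2) I by auto
  note ds = dstar_triple[OF lt distinct, folded I]
  have chain: "zdiff L y z = zdiff L x y"
    if "x \<in> I" "y \<in> I" "z \<in> I" "x \<noteq> y" "y \<noteq> z" "x \<noteq> z" for x y z
  proof (rule zdiff_chain_eq[OF assms(1)])
    have "{zdiff L x y, zdiff L y x, zdiff L y z, zdiff L z y} \<subseteq> dstar L I"
      using that zdiff_pos[of _ L] assms(2) by (auto simp: mem_dstar_iff)
    then have "card {zdiff L x y, zdiff L y x, zdiff L y z, zdiff L z y} \<le> card (dstar L I)"
      using lt by (intro card_mono finite_dstar) auto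
    then show "card {zdiff L x y, zdiff L y x, zdiff L y z, zdiff L z y} < 4"
      using assms(4) by linarith
  qed (use that assms(2) in auto)
  define u where "u = zdiff L a b"
  have bc: "zdiff L b c = u" and ca: "zdiff L c a = u"
    using chain[of a b c] chain[of b c a] distinct unfolding u_def I by auto
  have "u + b = (if b \<le> a then a else a + L)"
    using zdiff_add_cases[of a L b] lt by (simp add: u_def)
  moreover have "u + c = (if c \<le> b then b else b + L)"
    using zdiff_add_cases[of b L c] lt bc by simp
  moreover have "u + a = (if a \<le> c then c else c + L)"
    using zdiff_add_cases[of c L a] lt ca by simp
  ultimately have three_u: "3 * u = L \<or> 3 * u = 2 * L"
    using distinct by (auto split: if_splits)
  have "zdiff L b a = L - u" "zdiff L c b = L - u" "zdiff L a c = L - u"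
    using zdiff_add_zdiff lt distinct u_def bc ca by (metis add_diff_cancel_left')+
  then have ds_u: "dstar L I = {u, L - u}" using ds u_def bc ca by auto
  from three_u show ?thesis
  proof
    assume "3 * u = L"
    then have "L div 3 = u" "2 * L div 3 = L - u" "3 dvd L" by auto
    then show ?thesis using ds_u by auto
  next
    assume "3 * u = 2 * L"
    then have "L div 3 = L - u" "2 * L div 3 = u" "L = 3 * (L - u)" by auto
    then show ?thesis using ds_u by (metis dvd_triv_left insert_commute)
  qed
qed

lemma is_CAC_D:
  assumes "is_CAC L w C"
  shows "finite C" and "I \<in> C \<Longrightarrow> I \<subseteq> {..<L} \<and> card I = w"
    and "I \<in> C \<Longrightarrow> J \<in> C \<Longrightarrow> I \<noteq> J \<Longrightarrow> dstar L I \<inter> dstar L J = {}"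
proof -
  have "C \<subseteq> Pow {..<L}" using assms by (auto simp: is_CAC_def Pset_def)
  then show "finite C" by (rule finite_subset) simp
qed (use assms in \<open>auto simp: is_CAC_def Pset_def\<close>)

lemma card_Union_dstar:
  assumes "is_CAC L w C" "0 < L"
  shows "card (\<Union>I\<in>C. dstar L I) = (\<Sum>I\<in>C. card (dstar L I))"
  using assms is_CAC_D[OF assms(1)] finite_dstar by (intro card_UN_disjoint) auto

text \<open>By \<open>card_dstar_lt_4_imp_thirds\<close>, these are the translates of \<open>{0, L/3, 2L/3}\<close>.\<close>

definition exceptional_words :: "nat \<Rightarrow> nat set set \<Rightarrow> nat set set" where
  "exceptional_words L C = {I \<in> C. card (dstar L I) < 4}"

lemma exceptional_word_dstar:
  assumes "is_CAC L 3 C" "odd L" "I \<in> exceptional_words L C"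
  shows "3 dvd L \<and> dstar L I = {L div 3, 2 * L div 3}"
  using assms is_CAC_D(2)[OF assms(1)] card_dstar_lt_4_imp_thirds
  unfolding exceptional_words_def by blast

lemma card_exceptional_words_le_1:
  assumes "is_CAC L 3 C" "odd L"
  shows "card (exceptional_words L C) \<le> 1"
proof -
  have "I = J" if "I \<in> exceptional_words L C" "J \<in> exceptional_words L C" for I J
  proof (rule ccontr)
    assume "I \<noteq> J"
    moreover have "L div 3 \<in> dstar L I \<inter> dstar L J"
      using exceptional_word_dstar[OF assms] that by auto
    ultimately show False
      using is_CAC_D(3)[OF assms(1)] that unfolding exceptional_words_def by blast
  qed
  moreover have "finite (exceptional_words L C)"
    using is_CAC_D(1)[OF assms(1)] unfolding exceptional_words_def by simp
  ultimately show ?thesis by (simp add: card_le_Suc0_iff_eq)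
qed

lemma exceptional_words_empty_if_not_3_dvd:
  "is_CAC L 3 C \<Longrightarrow> odd L \<Longrightarrow> \<not> 3 dvd L \<Longrightarrow> exceptional_words L C = {}"
  using exceptional_word_dstar by blast

lemma sum_card_dstar_split:
  assumes "is_CAC L 3 C" "odd L" "3 \<le> L"
  shows "(\<Sum>I\<in>C. card (dstar L I))
    = 2 * card (exceptional_words L C) + (\<Sum>I\<in>C - exceptional_words L C. card (dstar L I))"
proof -
  let ?E = "exceptional_words L C"
  have "card {L div 3, 2 * L div 3} = 2" using assms(3) by simp
  then have "(\<Sum>I\<in>?E. card (dstar L I)) = 2 * card ?E"
    using exceptional_word_dstar[OF assms(1,2)] by simp
  moreover have "?E \<subseteq> C" unfolding exceptional_words_def by blast
  ultimately show ?thesis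
    using sum.subset_diff[of ?E C "\<lambda>I. card (dstar L I)"] is_CAC_D(1)[OF assms(1)] by linarith
qed

lemma card_CAC_le:
  assumes "is_CAC L 3 C" "odd L" "3 \<le> L"
  shows "4 * card C \<le> L - 1 + 2 * card (exceptional_words L C)"
proof -
  let ?E = "exceptional_words L C"
  have "?E \<subseteq> C" unfolding exceptional_words_def by blast
  then have card_diff: "card (C - ?E) = card C - card ?E" "card ?E \<le> card C"
    using is_CAC_D(1)[OF assms(1)] by (auto intro: card_Diff_subset card_mono finite_subset)
  have "4 * card (C - ?E) = (\<Sum>I\<in>C - ?E. 4)" by simp
  also have "\<dots> \<le> (\<Sum>I\<in>C - ?E. card (dstar L I))"
    by (rule sum_mono) (auto simp: exceptional_words_def)
  finally have "4 * card (C - ?E) + 2 * card ?E \<le> (\<Sum>I\<in>C. card (dstar L I))"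
    using sum_card_dstar_split[OF assms] by linarith
  also have "\<dots> = card (\<Union>I\<in>C. dstar L I)"
    using card_Union_dstar[OF assms(1)] assms(3) by simp
  also have "\<dots> \<le> card {1..<L}"
    using dstar_subset[of L] assms(3) by (intro card_mono) auto
  finally show ?thesis using card_diff by simp
qed

lemma equi_diff_word_3_obtain:
  assumes "equi_diff_word L 3 I" "0 < L"
  obtains h where "h < L" "I = {0, h, 2 * h mod L}"
proof -
  obtain g where g: "I = {(i * g) mod L | i. i < 3}"
    using assms(1) unfolding equi_diff_word_def by blast
  have "{(i * g) mod L | i. i < (3::nat)} = (\<lambda>i. (i * g) mod L) ` {..<3}" by auto
  moreover have "{..<3::nat} = {0, 1, 2}" by auto
  ultimately have "I = {0, g mod L, 2 * (g mod L) mod L}"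
    using g by (simp add: mod_mult_right_eq)
  then show ?thesis using that[of "g mod L"] assms(2) by simp
qed

lemma dstar_equi_triple_subset:
  assumes "h < L"
  shows "dstar L {0, h, 2 * h mod L} \<subseteq> {h, L - h, 2 * h mod L, L - 2 * h mod L}"
proof
  define k where "k = 2 * h mod L"
  have k: "k = (if 2 * h < L then 2 * h else 2 * h - L)"
    using assms by (simp add: k_def mod_if)
  fix z assume "z \<in> dstar L {0, h, 2 * h mod L}"
  then obtain x y where xy: "x \<in> {0, h, k}" "y \<in> {0, h, k}" "z = zdiff L x y" "z \<noteq> 0"
    unfolding mem_dstar_iff k_def by blast
  moreover have "x < L" "y < L" using xy(1,2) assms k by auto
  ultimately have "z = (if y \<le> x then x - y else x + L - y)" "z \<noteq> 0"
    using zdiff_eq by auto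
  then show "z \<in> {h, L - h, 2 * h mod L, L - 2 * h mod L}"
    using xy(1,2) k assms unfolding k_def[symmetric] by (auto split: if_splits)
qed

lemma card_dstar_equi_le_4:
  assumes "equi_diff_word L 3 I" "0 < L"
  shows "card (dstar L I) \<le> 4"
proof -
  obtain h where h: "h < L" "I = {0, h, 2 * h mod L}"
    using equi_diff_word_3_obtain[OF assms] .
  have "card (dstar L I) \<le> card {h, L - h, 2 * h mod L, L - 2 * h mod L}"
    using dstar_equi_triple_subset[OF h(1)] h(2) by (intro card_mono) auto
  also have "\<dots> \<le> 4"
    using card_length[of "[h, L - h, 2 * h mod L, L - 2 * h mod L]"] by simp
  finally show ?thesis .
qed

lemma equi_word_with_third_is_exceptional:
  assumes "odd L" "3 dvd L" "equi_diff_word L 3 I"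
    and "L div 3 \<in> dstar L I \<or> 2 * L div 3 \<in> dstar L I"
  shows "card (dstar L I) < 4"
proof -
  obtain t where t: "L = 3 * t" using assms(2) by blast
  then have "odd t" using assms(1) by simp
  have "0 < L" using assms(1) by (rule odd_pos)
  obtain h where h: "h < L" "I = {0, h, 2 * h mod L}"
    using equi_diff_word_3_obtain[OF assms(3) \<open>0 < L\<close>] .
  define k where "k = 2 * h mod L"
  have k: "k = (if 2 * h < L then 2 * h else 2 * h - L)"
    using h(1) by (simp add: k_def mod_if)
  have "L div 3 = t" "2 * L div 3 = 2 * t" using t by auto
  then have "t \<in> {h, L - h, k, L - k} \<or> 2 * t \<in> {h, L - h, k, L - k}"
    using dstar_equi_triple_subset[OF h(1)] assms(4) h(2) k_def by auto
  \<comment> \<open>\<open>t\<close> is odd, which rules out \<open>2h \<equiv> \<plusminus>t\<close> unless \<open>h \<equiv> \<plusminus>t\<close>\<close>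
  moreover have "2 * h \<noteq> t" "2 * h \<noteq> 5 * t" using \<open>odd t\<close> by presburger+
  ultimately have "k = L - h" using t h(1) k by (auto split: if_splits)
  then have "dstar L I \<subseteq> {h, L - h}"
    using dstar_equi_triple_subset[OF h(1)] h(1) h(2) k_def by auto
  then have "card (dstar L I) \<le> card {h, L - h}" by (intro card_mono) auto
  also have "\<dots> \<le> 2" by (simp add: card_insert_if)
  finally show ?thesis by simp
qed

lemma card_leave_ge:
  assumes "is_CAC L 3 C" "equi_diff_code L 3 C" "odd L" "3 \<le> L"
  shows "L - 1 + 2 * card (exceptional_words L C) \<le> 4 * card C + card (leave L C)"
proof -
  let ?E = "exceptional_words L C" and ?U = "\<Union>I\<in>C. dstar L I"
  have "?E \<subseteq> C" unfolding exceptional_words_def by blast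
  then have card_diff: "card (C - ?E) = card C - card ?E" "card ?E \<le> card C"
    using is_CAC_D(1)[OF assms(1)] by (auto intro: card_Diff_subset card_mono finite_subset)
  have "(\<Sum>I\<in>C - ?E. card (dstar L I)) \<le> (\<Sum>I\<in>C - ?E. 4)"
    using assms(2,4) card_dstar_equi_le_4 unfolding equi_diff_code_def
    by (intro sum_mono) auto
  then have "card ?U \<le> 2 * card ?E + 4 * card (C - ?E)"
    using card_Union_dstar[OF assms(1)] sum_card_dstar_split[OF assms(1,3,4)] assms(4) by simp
  moreover have "{1..<L} - ?U \<subseteq> leave L C"
    unfolding leave_def dstar_def by auto
  then have "card ({1..<L} - ?U) \<le> card (leave L C)"
    unfolding leave_def by (intro card_mono) auto
  then have "L - 1 - card ?U \<le> card (leave L C)"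
    using diff_card_le_card_Diff[of ?U "{1..<L}"] finite_dstar assms(4)
      is_CAC_D(1)[OF assms(1)] by simp
  ultimately show ?thesis using card_diff by linarith
qed

lemma exceptional_words_nonempty:
  assumes "is_CAC L 3 C" "equi_diff_code L 3 C" "odd L" "3 \<le> L" "3 dvd L"
    and "\<not> {L div 3, 2 * L div 3} \<subseteq> leave L C"
  shows "exceptional_words L C \<noteq> {}"
proof -
  obtain t where t: "t \<in> {L div 3, 2 * L div 3}" "t \<notin> leave L C" using assms(6) by blast
  moreover have "0 < t" "t < L" using t(1) assms(4) by auto
  ultimately obtain I where "I \<in> C" "t \<in> dstar L I"
    unfolding leave_def dstar_def by auto
  moreover have "card (dstar L I) < 4"
    using equi_word_with_third_is_exceptional[OF assms(3,5)] assms(2) \<open>I \<in> C\<close> t(1)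
      \<open>t \<in> dstar L I\<close> unfolding equi_diff_code_def by blast
  ultimately show ?thesis unfolding exceptional_words_def by blast
qed

lemma max_card_CAC_attained:
  assumes "is_CAC L w C" "equi_diff_code L w C"
    and "\<And>C'. is_CAC L w C' \<Longrightarrow> card C' \<le> card C"
  shows "M_CAC L w = card C" "Me_CAC L w = card C"
proof -
  have fin: "finite {card C' | C'. is_CAC L w C' \<and> P C'}" for P
    by (rule finite_subset[of _ "{..card C}"]) (use assms(3) in blast)+
  show "M_CAC L w = card C"
    unfolding M_CAC_def
    by (rule Max_eqI) (use fin[of "\<lambda>_. True"] assms in auto)
  show "Me_CAC L w = card C"
    unfolding Me_CAC_def
    by (rule Max_eqI) (use fin[of "equi_diff_code L w"] assms in auto)
qed

theorem mainTheorem11: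
  fixes L :: nat and C :: "nat set set"
  assumes "L \<ge> 3" and "odd L"
    and "is_CAC L 3 C" and "equi_diff_code L 3 C"
    and "card (leave L C) < 4"
    and "\<not> (3 dvd L \<and> {L div 3, 2 * L div 3} \<subseteq> leave L C)"
  shows "optimal_CAC L 3 C \<and> card C = Me_CAC L 3 \<and> Me_CAC L 3 = M_CAC L 3"
proof -
  have "card C' \<le> card C" if C': "is_CAC L 3 C'" for C'
  proof -
    have "card (exceptional_words L C') \<le> card (exceptional_words L C)"
    proof (cases "3 dvd L")
      case True
      then have "exceptional_words L C \<noteq> {}"
        using exceptional_words_nonempty assms by blast
      moreover have "finite (exceptional_words L C)"
        using is_CAC_D(1)[OF assms(3)] unfolding exceptional_words_def by simp
      ultimately have "1 \<le> card (exceptional_words L C)"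
        by (simp add: Suc_leI card_gt_0_iff)
      then show ?thesis
        using card_exceptional_words_le_1[OF C' assms(2)] by linarith
    qed (simp add: exceptional_words_empty_if_not_3_dvd[OF C' assms(2)])
    then show ?thesis
      using card_CAC_le[OF C' assms(2,1)] card_leave_ge[OF assms(3,4,2,1)] assms(5) by linarith
  qed
  then show ?thesis
    using max_card_CAC_attained[OF assms(3,4)] assms(3) unfolding optimal_CAC_def by simp
qed

end
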